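(* Let $p_0=2,p_1=3,p_2=5,\dots$ be the primes in increasing order. For every $n\ge1$, $$msr_n(SP_1)\;\ge\;p_{n-1}\qquad\text{and}\qquad msr_{n+1}(SP_0)\;\ge\;2\,p_{n-1},$$ where $msr_n(SP_1)$ is the maximum series without units of $n$-fillings formed by grids with modules $p_1,\dots,p_n$, and $msr_{n+1}(SP_0)$ is the maximum series without units of $(n+1)$-fillings formed by grids with modules $p_0,\dots,p_n$.
   Context: A grid $S(a)$ of module $a\ge1$ with shift $k$ is the sequence $(l_j)_{j\in\mathbb Z}$ with $l_j=0$ iff $j\equiv k\pmod a$, else $l_j=1$. Products of grids are elementwise logical ANDs; an $n$-filling with modules $a_1,\dots,a_n$ is such a product (arbitrary shifts) in which omitting any grid changes the product. $SP_1$ is the system of grids with modules $3,5,7,11,\dots$ (all odd primes) and $SP_0$ the system with modules $2,3,5,7,\dots$ (all primes). A $0$-series is a segment between positions $i<k$ with $l_i=l_k=1$ and no ones strictly between; its length is $k-i$. The maximum series is the supremum over all shifts of the largest length of a $0$-series. *)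

theory Defs
  imports "HOL-Computational_Algebra.Primes" "HOL-Library.Extended_Nat" "HOL-Library.Infinite_Set"
begin

definition nthp :: "nat \<Rightarrow> nat" where
  "nthp j = Infinite_Set.enumerate {q. prime q} j"

text \<open>Grid S(a) with shift k: value True (= 1) at position j unless j = k mod a (value 0).\<close>
definition grid :: "nat \<Rightarrow> int \<Rightarrow> int \<Rightarrow> bool" where
  "grid a k j = (j mod int a \<noteq> k mod int a)"

definition gprod :: "nat list \<Rightarrow> int list \<Rightarrow> int \<Rightarrow> bool" where
  "gprod ms ks j = (\<forall>i<length ms. grid (ms ! i) (ks ! i) j)"

definition gprod_omit :: "nat list \<Rightarrow> int list \<Rightarrow> nat \<Rightarrow> int \<Rightarrow> bool" where
  "gprod_omit ms ks r j = (\<forall>i<length ms. i \<noteq> r \<longrightarrow> grid (ms ! i) (ks ! i) j)"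

definition is_filling :: "nat list \<Rightarrow> int list \<Rightarrow> bool" where
  "is_filling ms ks \<longleftrightarrow> length ks = length ms \<and>
     (\<forall>r<length ms. gprod_omit ms ks r \<noteq> gprod ms ks)"

definition zero_series :: "(int \<Rightarrow> bool) \<Rightarrow> int \<Rightarrow> int \<Rightarrow> bool" where
  "zero_series l i k \<longleftrightarrow> i < k \<and> l i \<and> l k \<and> (\<forall>j. i < j \<and> j < k \<longrightarrow> \<not> l j)"

definition msr :: "nat list \<Rightarrow> enat" where
  "msr ms = Sup {enat (nat (k - i)) | ks i k. is_filling ms ks \<and> zero_series (gprod ms ks) i k}"

end

theory Submission imports Defs begin

text \<open>Let n \<ge> 2 and q = p_{n-1}. Shift the grid of p_j so that its zeros are the x \<equiv> e_j (mod p_j),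
  where e_{n-1} = 1, e_n = -1 and e_j = 0 otherwise. Then every x with |x| < q is a zero of the
  product: 0 and \<plusminus>1 are zeros of the grids of p_0, p_{n-1}, p_n, and any other such x has a prime
  factor below q. The points \<plusminus>q are ones, because p_n \<ge> q + 2; this is a 0-series of length 2q.
  Each grid is essential, since one of 1, -1, p_j is a zero of the grid of p_j alone.
  Without the grid of 2 the same argument runs on the odd numbers 2y + 1 (2 is invertible
  modulo the odd primes) and yields a 0-series of length q. For n = 1 the fillings with
  modules 3 and 2, 3 are checked by hand.\<close>

lemma prime_nthp: "prime (nthp j)"
  using enumerate_in_set[OF primes_infinite] unfolding nthp_def by simp

lemma nthp_less_iff: "nthp i < nthp j \<longleftrightarrow> i < j"
  unfolding nthp_def using primes_infinite by simp

lemma nthp_0: "nthp 0 = 2"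
  unfolding nthp_def enumerate_0 by (rule Least_equality) (auto simp: prime_ge_2_nat)

lemma prime_less_nthp_is_nthp:
  assumes "prime q" "q < nthp m"
  obtains j where "j < m" "nthp j = q"
proof -
  obtain j where "nthp j = q"
    using enumerate_Ex[OF primes_infinite] assms(1) unfolding nthp_def by auto
  with assms(2) nthp_less_iff that show ?thesis by blast
qed

lemma nthp_Suc_0: "nthp (Suc 0) = 3"
proof (rule ccontr)
  assume "nthp (Suc 0) \<noteq> 3"
  moreover have "2 < nthp (Suc 0)" using nthp_less_iff[of 0 "Suc 0"] nthp_0 by simp
  ultimately have "3 < nthp (Suc 0)" by linarith
  then obtain j where "j < Suc 0" "nthp j = 3" using prime_less_nthp_is_nthp[of 3] by auto
  then show False using nthp_0 by simp
qed

lemma odd_nthp: "1 \<le> j \<Longrightarrow> odd (nthp j)"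
  using prime_odd_nat[OF prime_nthp] nthp_less_iff[of 0 j] nthp_0 by auto

lemma nthp_dvd_nthp_iff: "int (nthp i) dvd int (nthp j) \<longleftrightarrow> i = j"
proof -
  have "nthp i = nthp j \<longleftrightarrow> i = j" using nthp_less_iff by (metis linorder_neq_iff)
  thus ?thesis using primes_dvd_imp_eq[OF prime_nthp prime_nthp] by auto
qed

lemma nthp_Suc_ge: "1 \<le> j \<Longrightarrow> nthp j + 2 \<le> nthp (Suc j)"
  using odd_nthp[of j] odd_nthp[of "Suc j"] nthp_less_iff[of j "Suc j"]
  by (auto elim!: oddE)

lemma not_dvd_if_abs_less:
  fixes d x :: int
  assumes "x \<noteq> 0" "\<bar>x\<bar> < \<bar>d\<bar>"
  shows "\<not> d dvd x"
  using dvd_imp_le_int[OF assms(1)] assms(2) by fastforce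

lemma grid_iff_not_dvd: "grid a k y \<longleftrightarrow> \<not> int a dvd y - k"
  unfolding grid_def by (simp add: mod_eq_dvd_iff)

lemma grid_odd_positions:
  assumes "odd a"
  shows "grid a ((e - 1) * ((int a + 1) div 2)) y \<longleftrightarrow> \<not> int a dvd 2 * y + 1 - e"
proof -
  define k where "k = (e - 1) * ((int a + 1) div 2)"
  have "2 * k = (e - 1) * (int a + 1)"
    using assms unfolding k_def by (auto elim!: oddE simp: algebra_simps)
  hence "2 * y + 1 - e = (e - 1) * int a + 2 * (y - k)"
    by (simp add: algebra_simps)
  hence "int a dvd 2 * y + 1 - e \<longleftrightarrow> int a dvd 2 * (y - k)"
    by (simp only: dvd_add_right_iff dvd_triv_right)
  also have "\<dots> \<longleftrightarrow> int a dvd y - k"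
  proof -
    have "coprime (int a) 2" using assms by simp
    thus ?thesis using coprime_dvd_mult_right_iff by blast
  qed
  finally show ?thesis unfolding k_def grid_iff_not_dvd by simp
qed

lemma gprod_map_upt:
  "gprod (map g [a..<b]) (map f [a..<b]) y \<longleftrightarrow> (\<forall>j\<in>{a..<b}. grid (g j) (f j) y)"
  unfolding gprod_def by (auto, metis add_diff_inverse_nat diff_less_mono not_less)

lemma msr_map_upt_ge:
  fixes zero :: "nat \<Rightarrow> int \<Rightarrow> bool"
  assumes grid_zero: "\<And>j y. j \<in> {a..<b} \<Longrightarrow> grid (g j) (f j) y \<longleftrightarrow> \<not> zero j y"
    and isolated_zero: "\<And>j. j \<in> {a..<b} \<Longrightarrow> \<exists>y. zero j y \<and> (\<forall>j'\<in>{a..<b}. j' \<noteq> j \<longrightarrow> \<not> zero j' y)"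
    and "u < v"
    and ends: "\<And>j. j \<in> {a..<b} \<Longrightarrow> \<not> zero j u" "\<And>j. j \<in> {a..<b} \<Longrightarrow> \<not> zero j v"
    and inside: "\<And>y. u < y \<Longrightarrow> y < v \<Longrightarrow> \<exists>j\<in>{a..<b}. zero j y"
  shows "enat (nat (v - u)) \<le> msr (map g [a..<b])"
proof -
  let ?ms = "map g [a..<b]" and ?ks = "map f [a..<b]"
  have one_iff: "gprod ?ms ?ks y \<longleftrightarrow> (\<forall>j\<in>{a..<b}. \<not> zero j y)" for y
    using gprod_map_upt grid_zero by auto
  have "is_filling ?ms ?ks"
    unfolding is_filling_def
  proof (intro conjI allI impI)
    fix r assume "r < length ?ms"
    then have r: "a + r \<in> {a..<b}" by simp
    then obtain y where y: "zero (a + r) y" "\<forall>j'\<in>{a..<b}. j' \<noteq> a + r \<longrightarrow> \<not> zero j' y"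
      using isolated_zero by blast
    have "gprod_omit ?ms ?ks r y"
      unfolding gprod_omit_def using y(2) grid_zero by auto
    moreover have "\<not> gprod ?ms ?ks y" using one_iff y(1) r by blast
    ultimately show "gprod_omit ?ms ?ks r \<noteq> gprod ?ms ?ks" by metis
  qed simp
  moreover have "zero_series (gprod ?ms ?ks) u v"
    unfolding zero_series_def using one_iff ends inside \<open>u < v\<close> by blast
  ultimately show ?thesis unfolding msr_def by (auto intro!: Sup_upper)
qed

definition residue :: "nat \<Rightarrow> nat \<Rightarrow> int" where
  "residue n j = (if j = n - 1 then 1 else if j = n then -1 else 0)"

definition covers :: "nat \<Rightarrow> nat \<Rightarrow> int \<Rightarrow> bool" where
  "covers n j x \<longleftrightarrow> int (nthp j) dvd x - residue n j"

definition private_zero :: "nat \<Rightarrow> nat \<Rightarrow> int" where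
  "private_zero n j = (if j = n - 1 then 1 else if j = n then -1 else int (nthp j))"

lemma residue_eqs:
  assumes "2 \<le> n"
  shows "residue n n = -1" "j < n - 1 \<Longrightarrow> residue n j = 0"
  using assms by (auto simp: residue_def)

lemma nthp_last_bounds:
  assumes "2 \<le> n"
  shows "3 \<le> nthp (n - 1)" "nthp (n - 1) + 2 \<le> nthp n"
proof -
  show "3 \<le> nthp (n - 1)"
    using assms nthp_Suc_0 nthp_less_iff[of 1 "n - 1"] by (cases "n = 2") auto
  show "nthp (n - 1) + 2 \<le> nthp n"
    using assms nthp_Suc_ge[of "n - 1"] by (simp add: Suc_diff_le)
qed

lemma covers_interval:
  assumes "2 \<le> n" "\<bar>x\<bar> < int (nthp (n - 1))"
  obtains j where "j \<le> n" "covers n j x" "odd x \<Longrightarrow> 1 \<le> j"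
proof -
  consider "x = 0" | "x = 1" | "x = -1" | "2 \<le> \<bar>x\<bar>" by linarith
  then show ?thesis
  proof cases
    case 1
    then show ?thesis using that[of 0] assms(1) by (simp add: covers_def residue_eqs)
  next
    case 2
    then show ?thesis using that[of "n - 1"] assms(1) by (simp add: covers_def residue_def)
  next
    case 3
    then show ?thesis using that[of n] assms(1) by (simp add: covers_def residue_eqs)
  next
    case 4
    then have "nat \<bar>x\<bar> \<noteq> 1" by simp
    then obtain q where q: "prime q" "int q dvd x"
      using prime_factor_nat[of "nat \<bar>x\<bar>"] by auto
    with 4 have "q < nthp (n - 1)"
      using dvd_imp_le_int[of x "int q"] assms(2) by linarith
    then obtain j where j: "j < n - 1" "nthp j = q"
      using prime_less_nthp_is_nthp q(1) by blast
    moreover have "odd x \<Longrightarrow> 1 \<le> j"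
      using q(2) j(2) nthp_0 by (cases j) auto
    ultimately show ?thesis using that[of j] q(2) assms(1) by (simp add: covers_def residue_eqs)
  qed
qed

lemma not_covers_endpoint:
  assumes "2 \<le> n" "j \<le> n" "\<bar>x\<bar> = int (nthp (n - 1))"
  shows "\<not> covers n j x"
proof -
  note bounds = nthp_last_bounds[OF assms(1)]
  have x_dvd: "int (nthp j) dvd x \<longleftrightarrow> j = n - 1"
    using assms(3) nthp_dvd_nthp_iff by (metis dvd_abs_iff)
  consider "j = n - 1" | "j = n" | "j < n - 1" using assms(2) by linarith
  then show ?thesis
  proof cases
    case 1
    then have "covers n j x \<longleftrightarrow> int (nthp j) dvd 1"
      using x_dvd by (simp add: covers_def residue_def dvd_diff_right_iff)
    then show ?thesis using 1 bounds(1) by simp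
  next
    case 2
    have "x + 1 \<noteq> 0" "\<bar>x + 1\<bar> < int (nthp n)" using assms(3) bounds by linarith+
    then show ?thesis
      using 2 assms(1) not_dvd_if_abs_less by (simp add: covers_def residue_eqs)
  next
    case 3
    then show ?thesis using x_dvd assms(1) by (simp add: covers_def residue_eqs)
  qed
qed

lemma odd_private_zero: "1 \<le> j \<Longrightarrow> odd (private_zero n j)"
  by (simp add: private_zero_def odd_nthp)

lemma covers_private_zero:
  assumes "2 \<le> n"
  shows "covers n j (private_zero n j)"
  using assms by (auto simp: covers_def private_zero_def residue_def)

lemma not_covers_private_zero:
  assumes "2 \<le> n" "j \<le> n" "j' \<le> n" "j' \<noteq> j"
  shows "\<not> covers n j' (private_zero n j)"
proof (cases "j' < n - 1")
  case True
  have "private_zero n j \<in> {1, -1, int (nthp j)}" by (simp add: private_zero_def)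
  then have "\<not> int (nthp j') dvd private_zero n j"
    using prime_ge_2_nat[OF prime_nthp, of j'] nthp_dvd_nthp_iff assms(4) by auto
  then show ?thesis using True assms(1) by (simp add: covers_def residue_eqs)
next
  case False
  note bounds = nthp_last_bounds[OF assms(1)]
  have "nthp j < nthp (n - 1)" if "j \<noteq> n - 1" "j \<noteq> n"
    using that assms(2) nthp_less_iff[of j "n - 1"] by linarith
  moreover have "2 \<le> nthp j" using prime_ge_2_nat[OF prime_nthp] .
  moreover have "j' = n - 1 \<or> j' = n" using False assms(3) by linarith
  ultimately have "private_zero n j - residue n j' \<noteq> 0"
    "\<bar>private_zero n j - residue n j'\<bar> < int (nthp j')"
    using assms bounds by (auto simp: private_zero_def residue_def)
  then show ?thesis using not_dvd_if_abs_less by (simp add: covers_def)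
qed

lemma msr_odd_primes_ge:
  assumes "2 \<le> n"
  shows "enat (nthp (n - 1)) \<le> msr (map nthp [1..<n + 1])"
proof -
  have "odd (int (nthp (n - 1)))" using odd_nthp[of "n - 1"] assms by simp
  then obtain m where m: "int (nthp (n - 1)) = 2 * m + 1" by (rule oddE)
  with nthp_last_bounds(1)[OF assms] have "1 \<le> m" by linarith
  define shift where "shift j = (residue n j - 1) * ((int (nthp j) + 1) div 2)" for j
  have "enat (nat (m - (- m - 1))) \<le> msr (map nthp [1..<n + 1])"
  proof (rule msr_map_upt_ge[where f = shift and zero = "\<lambda>j y. covers n j (2 * y + 1)"])
    fix j assume j: "j \<in> {1..<n + 1}"
    have "odd (nthp j)" using j odd_nthp by simp
    then show "grid (nthp j) (shift j) y \<longleftrightarrow> \<not> covers n j (2 * y + 1)" for y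
      unfolding shift_def covers_def by (rule grid_odd_positions)
    have "2 * ((private_zero n j - 1) div 2) + 1 = private_zero n j"
      using odd_private_zero[of j n] j by (auto elim!: oddE)
    then show "\<exists>y. covers n j (2 * y + 1) \<and> (\<forall>j'\<in>{1..<n + 1}. j' \<noteq> j \<longrightarrow> \<not> covers n j' (2 * y + 1))"
      using covers_private_zero[OF assms] not_covers_private_zero[OF assms] j
      by (intro exI[of _ "(private_zero n j - 1) div 2"]) auto
    have "\<bar>2 * (- m - 1) + 1\<bar> = int (nthp (n - 1))" "\<bar>2 * m + 1\<bar> = int (nthp (n - 1))"
      using m by arith+
    then show "\<not> covers n j (2 * (- m - 1) + 1)" "\<not> covers n j (2 * m + 1)"
      using not_covers_endpoint[OF assms] j by auto
  next
    fix y assume "- m - 1 < y" "y < m"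
    then have "\<bar>2 * y + 1\<bar> < int (nthp (n - 1))" using m by linarith
    then obtain j where "j \<le> n" "covers n j (2 * y + 1)" "odd (2 * y + 1) \<Longrightarrow> 1 \<le> j"
      using covers_interval[OF assms] by blast
    then show "\<exists>j\<in>{1..<n + 1}. covers n j (2 * y + 1)" by auto
  qed (use \<open>1 \<le> m\<close> in simp)
  moreover have "nat (m - (- m - 1)) = nthp (n - 1)" using m by arith
  ultimately show ?thesis by (simp only:)
qed

lemma msr_primes_ge:
  assumes "2 \<le> n"
  shows "enat (2 * nthp (n - 1)) \<le> msr (map nthp [0..<n + 1])"
proof -
  let ?q = "int (nthp (n - 1))"
  have "enat (nat (?q - - ?q)) \<le> msr (map nthp [0..<n + 1])"
  proof (rule msr_map_upt_ge[where f = "residue n" and zero = "covers n"])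
    fix j assume j: "j \<in> {0..<n + 1}"
    then show "grid (nthp j) (residue n j) y \<longleftrightarrow> \<not> covers n j y" for y
      by (simp add: grid_iff_not_dvd covers_def)
    show "\<exists>y. covers n j y \<and> (\<forall>j'\<in>{0..<n + 1}. j' \<noteq> j \<longrightarrow> \<not> covers n j' y)"
      using covers_private_zero[OF assms] not_covers_private_zero[OF assms] j
      by (intro exI[of _ "private_zero n j"]) auto
    show "\<not> covers n j (- ?q)" "\<not> covers n j ?q"
      using not_covers_endpoint[OF assms] j by simp_all
  next
    fix y assume "- ?q < y" "y < ?q"
    then have "\<bar>y\<bar> < ?q" by linarith
    then obtain j where "j \<le> n" "covers n j y" using covers_interval[OF assms] by blast
    then show "\<exists>j\<in>{0..<n + 1}. covers n j y" by auto
  qed (use nthp_last_bounds(1)[OF assms] in simp)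
  moreover have "nat (?q - - ?q) = 2 * nthp (n - 1)" by arith
  ultimately show ?thesis by (simp only:)
qed

lemma msr_3_ge: "enat 2 \<le> msr [3]"
proof -
  have "enat (nat (1 - - 1)) \<le> msr (map nthp [1..<2])"
  proof (rule msr_map_upt_ge[where f = "\<lambda>_. 0" and zero = "\<lambda>_ y. 3 dvd y"])
    fix j assume "j \<in> {1..<2::nat}"
    then have "j = 1" by simp
    then show "grid (nthp j) 0 y \<longleftrightarrow> \<not> 3 dvd y" for y
      using nthp_Suc_0 by (simp add: grid_iff_not_dvd)
    show "\<exists>y::int. 3 dvd y \<and> (\<forall>j'\<in>{1..<2}. j' \<noteq> j \<longrightarrow> \<not> 3 dvd y)"
      using \<open>j = 1\<close> by auto
  next
    fix y :: int assume "- 1 < y" "y < 1"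
    then have "y = 0" by simp
    then show "\<exists>j\<in>{1..<2::nat}. 3 dvd y" by auto
  qed auto
  moreover have "map nthp [1..<2] = [3]" by (simp add: upt_rec nthp_Suc_0 del: upt_Suc)
  ultimately show ?thesis by simp
qed

lemma msr_2_3_ge: "enat 4 \<le> msr [2, 3]"
proof -
  have two: "{0..<2::nat} = {0, 1}" by auto
  have "enat (nat (3 - - 1)) \<le> msr (map nthp [0..<2])"
  proof (rule msr_map_upt_ge[where f = int and zero = "\<lambda>j y. int (nthp j) dvd y - int j"])
    fix j assume "j \<in> {0..<2::nat}"
    then have j: "j = 0 \<or> j = 1" by auto
    show "grid (nthp j) (int j) y \<longleftrightarrow> \<not> int (nthp j) dvd y - int j" for y
      by (simp add: grid_iff_not_dvd)
    show "\<exists>y. int (nthp j) dvd y - int j \<and>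
        (\<forall>j'\<in>{0..<2}. j' \<noteq> j \<longrightarrow> \<not> int (nthp j') dvd y - int j')"
      using j nthp_0 nthp_Suc_0 by (intro exI[of _ "int j"]) (auto simp: two)
    show "\<not> int (nthp j) dvd - 1 - int j" "\<not> int (nthp j) dvd 3 - int j"
      using j nthp_0 nthp_Suc_0 by auto
  next
    fix y :: int assume "- 1 < y" "y < 3"
    then have "y = 0 \<or> y = 1 \<or> y = 2" by auto
    then show "\<exists>j\<in>{0..<2}. int (nthp j) dvd y - int j"
      using nthp_0 nthp_Suc_0 by (auto simp: two)
  qed simp
  moreover have "map nthp [0..<2] = [2, 3]" by (simp add: upt_rec nthp_0 nthp_Suc_0 del: upt_Suc)
  ultimately show ?thesis by simp
qed

theorem theorem13:
  fixes n :: nat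
  assumes "n \<ge> 1"
  shows "msr (map nthp [1..<n+1]) \<ge> enat (nthp (n - 1))
       \<and> msr (map nthp [0..<n+1]) \<ge> enat (2 * nthp (n - 1))"
proof (cases "n = 1")
  case True
  then show ?thesis using msr_3_ge msr_2_3_ge by (simp add: nthp_0 nthp_Suc_0)
next
  case False
  with assms have "2 \<le> n" by simp
  then show ?thesis using msr_odd_primes_ge msr_primes_ge by simp
qed

end
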